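(* For every level $t \in \mathcal{L}$ there exist $u_1, \ldots, u_n \in \mathcal{L}_s$ (with $n \ge 0$) such that $t =_{\mathcal{L}} \max(u_1, \ldots, u_n)$.
   Context: $\operatorname{imax}\colon \mathbb{N}\times\mathbb{N}\to\mathbb{N}$ is defined by $\operatorname{imax}(i,0)=0$ and $\operatorname{imax}(i,j+1)=\max(i,j+1)$. Levels are terms of the grammar $t ::= x \mid 0 \mid s(t) \mid \max(t,t) \mid \operatorname{imax}(t,t)$, with $x$ in a countable set of variables $\mathcal{X}$; $\mathcal{L}$ is the set of levels. A valuation is $\sigma\colon\mathcal{X}\to\mathbb{N}$; values are $[0]_\sigma=0$, $[x]_\sigma=\sigma(x)$, $[s(t)]_\sigma=[t]_\sigma+1$, $[\max(t_1,t_2)]_\sigma=\max([t_1]_\sigma,[t_2]_\sigma)$, $[\operatorname{imax}(t_1,t_2)]_\sigma=\operatorname{imax}([t_1]_\sigma,[t_2]_\sigma)$. Sublevels: for finite $E\subseteq\mathcal{X}$, $x\in\mathcal{X}$, $S\in\mathbb{N}$, $[A(E,x,S)]_\sigma$ is $0$ if some $y\in E$ has $\sigma(y)=0$ and $\sigma(x)+S$ otherwise; $[B(E,S)]_\sigma$ is $0$ if some $y\in E$ has $\sigma(y)=0$ and $S$ otherwise. $\mathcal{L}_s$ is the set of sublevels $A(E,x,S)$ with $x \in E$ and $B(E,S)$ with $S > 0$. $\max$ of a finite list is evaluated pointwise, with $\max()$ (empty) having value $0$. $t_1 =_{\mathcal{L}} t_2$ means $[t_1]_\sigma=[t_2]_\sigma$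 for all valuations $\sigma$. *)

theory Defs
  imports Main
begin

type_synonym var = nat

definition imax :: "nat \<Rightarrow> nat \<Rightarrow> nat" where
  "imax i j = (if j = 0 then 0 else max i j)"

datatype level = LVar var | LZero | LSucc level | LMax level level | LIMax level level

fun lval :: "(var \<Rightarrow> nat) \<Rightarrow> level \<Rightarrow> nat" where
  "lval \<sigma> (LVar x) = \<sigma> x"
| "lval \<sigma> LZero = 0"
| "lval \<sigma> (LSucc t) = lval \<sigma> t + 1"
| "lval \<sigma> (LMax t1 t2) = max (lval \<sigma> t1) (lval \<sigma> t2)"
| "lval \<sigma> (LIMax t1 t2) = imax (lval \<sigma> t1) (lval \<sigma> t2)"

datatype sublevel = SA "var set" var nat | SB "var set" nat

fun sval :: "(var \<Rightarrow> nat) \<Rightarrow> sublevel \<Rightarrow> nat" where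
  "sval \<sigma> (SA E x S) = (if \<exists>y\<in>E. \<sigma> y = 0 then 0 else \<sigma> x + S)"
| "sval \<sigma> (SB E S) = (if \<exists>y\<in>E. \<sigma> y = 0 then 0 else S)"

text \<open>Membership in L_s: E finite, and x \<in> E for A, S > 0 for B.\<close>
fun wf_sublevel :: "sublevel \<Rightarrow> bool" where
  "wf_sublevel (SA E x S) = (finite E \<and> x \<in> E)"
| "wf_sublevel (SB E S) = (finite E \<and> S > 0)"

definition smax_val :: "(var \<Rightarrow> nat) \<Rightarrow> sublevel list \<Rightarrow> nat" where
  "smax_val \<sigma> us = foldr (\<lambda>u m. max (sval \<sigma> u) m) us 0"

end

theory Submission
  imports Defs
begin

text \<open>Since a well-formed
  sublevel vanishes exactly when one of its guard variables does, multiplying a sublevel by the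
  indicator of "\<open>v \<noteq> 0\<close>" for another sublevel \<open>v\<close> amounts to adding the guard of \<open>v\<close>.
  Hence \<open>imax(a, max\<^sub>j v\<^sub>j) = max\<^sub>j max(v\<^sub>j, [v\<^sub>j \<noteq> 0] a)\<close> is again a maximum of sublevels. For the
  successor, \<open>max(u\<^sub>i) + 1 = max(B(\<emptyset>,1), u\<^sub>i + 1)\<close>, where shifting a vanishing \<open>u\<^sub>i\<close> keeps it 0.\<close>

fun sublevel_guard :: "sublevel \<Rightarrow> var set" where
  "sublevel_guard (SA E x S) = E"
| "sublevel_guard (SB E S) = E"

fun add_guard :: "var set \<Rightarrow> sublevel \<Rightarrow> sublevel" where
  "add_guard F (SA E x S) = SA (E \<union> F) x S"
| "add_guard F (SB E S) = SB (E \<union> F) S"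

fun sublevel_succ :: "sublevel \<Rightarrow> sublevel" where
  "sublevel_succ (SA E x S) = SA E x (S + 1)"
| "sublevel_succ (SB E S) = SB E (S + 1)"

definition imax_sublevels :: "sublevel list \<Rightarrow> sublevel list \<Rightarrow> sublevel list" where
  "imax_sublevels us vs = concat (map (\<lambda>v. v # map (add_guard (sublevel_guard v)) us) vs)"

definition represents :: "sublevel list \<Rightarrow> level \<Rightarrow> bool" where
  "represents us t \<longleftrightarrow> (\<forall>u\<in>set us. wf_sublevel u) \<and> (\<forall>\<sigma>. lval \<sigma> t = smax_val \<sigma> us)"

lemma smax_val_Nil [simp]: "smax_val \<sigma> [] = 0"
  by (simp add: smax_val_def)

lemma smax_val_Cons [simp]: "smax_val \<sigma> (u # us) = max (sval \<sigma> u) (smax_val \<sigma> us)"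
  by (simp add: smax_val_def)

lemma smax_val_append [simp]:
  "smax_val \<sigma> (us @ vs) = max (smax_val \<sigma> us) (smax_val \<sigma> vs)"
  by (induction us) auto

lemma sval_eq_0_iff:
  "wf_sublevel u \<Longrightarrow> sval \<sigma> u = 0 \<longleftrightarrow> (\<exists>y\<in>sublevel_guard u. \<sigma> y = 0)"
  by (cases u) auto

lemma sval_add_guard:
  "sval \<sigma> (add_guard F u) = (if \<exists>y\<in>F. \<sigma> y = 0 then 0 else sval \<sigma> u)"
  by (cases u) (auto simp: bex_Un)

lemma smax_val_map_add_guard:
  "smax_val \<sigma> (map (add_guard F) us) = (if \<exists>y\<in>F. \<sigma> y = 0 then 0 else smax_val \<sigma> us)"
  by (induction us) (auto simp: sval_add_guard)

lemma sval_sublevel_succ: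
  "sval \<sigma> (sublevel_succ u) =
     (if \<exists>y\<in>sublevel_guard u. \<sigma> y = 0 then 0 else sval \<sigma> u + 1)"
  by (cases u) auto

lemma smax_val_map_sublevel_succ:
  "max 1 (smax_val \<sigma> (map sublevel_succ us)) = smax_val \<sigma> us + 1"
proof (induction us)
  case Nil
  then show ?case by simp
next
  case (Cons u us)
  show ?case
  proof (cases "\<exists>y\<in>sublevel_guard u. \<sigma> y = 0")
    case True
    then have "sval \<sigma> u = 0"
      by (cases u) auto
    with True Cons.IH show ?thesis
      by (simp add: sval_sublevel_succ)
  next
    case False
    then have "sval \<sigma> (sublevel_succ u) = sval \<sigma> u + 1"
      by (simp add: sval_sublevel_succ)
    with Cons.IH show ?thesis
      by simp
  qed
qed

lemma smax_val_imax_sublevels: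
  assumes "\<forall>v\<in>set vs. wf_sublevel v"
  shows "smax_val \<sigma> (imax_sublevels us vs) = imax (smax_val \<sigma> us) (smax_val \<sigma> vs)"
  using assms
proof (induction vs)
  case Nil
  then show ?case by (simp add: imax_sublevels_def imax_def)
next
  case (Cons v vs)
  then have "sval \<sigma> v = 0 \<longleftrightarrow> (\<exists>y\<in>sublevel_guard v. \<sigma> y = 0)"
    by (simp add: sval_eq_0_iff)
  with Cons show ?case
    by (auto simp: imax_sublevels_def smax_val_map_add_guard imax_def max_def)
qed

lemma wf_sublevel_succ: "wf_sublevel u \<Longrightarrow> wf_sublevel (sublevel_succ u)"
  by (cases u) auto

lemma wf_sublevel_add_guard: "wf_sublevel u \<Longrightarrow> finite F \<Longrightarrow> wf_sublevel (add_guard F u)"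
  by (cases u) auto

lemma finite_sublevel_guard: "wf_sublevel u \<Longrightarrow> finite (sublevel_guard u)"
  by (cases u) auto

lemma wf_imax_sublevels:
  assumes "\<forall>u\<in>set us. wf_sublevel u" and "\<forall>v\<in>set vs. wf_sublevel v"
  shows "\<forall>w\<in>set (imax_sublevels us vs). wf_sublevel w"
  using assms
  by (auto simp: imax_sublevels_def intro: wf_sublevel_add_guard finite_sublevel_guard)

lemma represents_LVar: "represents [SA {x} x 0] (LVar x)"
  by (simp add: represents_def)

lemma represents_LZero: "represents [] LZero"
  by (simp add: represents_def)

lemma represents_LSucc:
  "represents us t \<Longrightarrow> represents (SB {} 1 # map sublevel_succ us) (LSucc t)"
  using smax_val_map_sublevel_succ by (auto simp: represents_def wf_sublevel_succ)

lemma represents_LMax: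
  "represents us t1 \<Longrightarrow> represents vs t2 \<Longrightarrow> represents (us @ vs) (LMax t1 t2)"
  by (auto simp: represents_def)

lemma represents_LIMax:
  "represents us t1 \<Longrightarrow> represents vs t2 \<Longrightarrow> represents (imax_sublevels us vs) (LIMax t1 t2)"
  unfolding represents_def
  by (intro conjI wf_imax_sublevels allI) (simp_all add: smax_val_imax_sublevels)

theorem theorem26:
  fixes t :: level
  shows "\<exists>us :: sublevel list. (\<forall>u\<in>set us. wf_sublevel u) \<and>
           (\<forall>\<sigma>. lval \<sigma> t = smax_val \<sigma> us)"
proof -
  have "\<exists>us. represents us t"
  proof (induction t)
    case (LVar x)
    then show ?case using represents_LVar by blast
  next
    case LZero
    then show ?case using represents_LZero by blast
  next
    case (LSucc t)
    then show ?case using represents_LSucc by blast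
  next
    case (LMax t1 t2)
    then show ?case using represents_LMax by blast
  next
    case (LIMax t1 t2)
    then show ?case using represents_LIMax by blast
  qed
  then show ?thesis by (simp add: represents_def)
qed

end
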